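(* Let $k\ge 2$ be a natural number, let $C>0$, and let $D\subseteq\mathbb{C}$ be a domain. Then the family $$\mathcal{F}_k:=\left\{ f \text{ holomorphic in } D \;:\; \frac{|f^{(k)}(z)|}{1+|f(z)|}\le C \text{ for all } z\in D\right\}$$ is quasi-normal in $D$.
   Context: A family $\mathcal{F}$ of meromorphic functions in a domain $D\subseteq\mathbb{C}$ is called quasi-normal if from each sequence $\{f_n\}_n$ in $\mathcal{F}$ one can extract a subsequence which converges locally uniformly (with respect to the spherical metric, the limit $\infty$ being allowed) on $D\setminus E$, where the set $E$ (which may depend on the sequence) has no accumulation point in $D$. *)

theory Defs
  imports "HOL-Complex_Analysis.Complex_Analysis"
begin

text \<open>Points of the Riemann sphere: \<open>Some a\<close> is the finite point a, \<open>None\<close> is \<infinity>.\<close>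

fun chordal :: "complex option \<Rightarrow> complex option \<Rightarrow> real" where
  "chordal (Some a) (Some b) =
     2 * norm (a - b) / (sqrt (1 + (norm a)\<^sup>2) * sqrt (1 + (norm b)\<^sup>2))"
| "chordal (Some a) None = 2 / sqrt (1 + (norm a)\<^sup>2)"
| "chordal None (Some b) = 2 / sqrt (1 + (norm b)\<^sup>2)"
| "chordal None None = 0"

definition sph_locally_uniform ::
  "(nat \<Rightarrow> complex \<Rightarrow> complex) \<Rightarrow> (complex \<Rightarrow> complex option) \<Rightarrow> complex set \<Rightarrow> bool" where
  "sph_locally_uniform fs g U \<longleftrightarrow>
     (\<forall>K. compact K \<and> K \<subseteq> U \<longrightarrow>
        (\<forall>e>0. \<forall>\<^sub>F n in sequentially. \<forall>z\<in>K. chordal (Some (fs n z)) (g z) < e))"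

definition quasi_normal :: "(complex \<Rightarrow> complex) set \<Rightarrow> complex set \<Rightarrow> bool" where
  "quasi_normal F D \<longleftrightarrow>
     (\<forall>fs. (\<forall>n. fs n \<in> F) \<longrightarrow>
        (\<exists>(r::nat \<Rightarrow> nat) (E::complex set) g. strict_mono r \<and> E \<subseteq> D \<and> (\<forall>z\<in>D. \<not> z islimpt E) \<and>
                 sph_locally_uniform (fs \<circ> r) g (D - E)))"

end

theory Submission
  imports Defs
begin

(*
  For holomorphic h let S(h, z) = \<Sum>j<k. |h^(j)(z)|. The inequality |h^(k)| \<le> C (1 + |h|)
  bounds the derivative of every term of S by (1 + C) (1 + max S), so on a disc of radius \<delta>
  with k \<delta> (1 + C) \<le> 1/2 the maximum of S is at most 2 S(centre) + 1. The radius does not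
  depend on h, so a bound on S(f n, z0) at one point propagates through the connected domain;
  the f n are then locally bounded and Montel's theorem applies. Otherwise S(f n, z0) \<rightarrow> \<infinity>, and
  the rescaled functions h n = f n / (1 + S(f n, z0)) still satisfy the inequality, with
  S(h n, z0) \<rightarrow> 1. A subsequence converges locally uniformly to a holomorphic g, which by Cauchy's
  estimates does not vanish identically; off the discrete zero set of g the f n tend to \<infinity>
  locally uniformly.
*)

definition jet_norm :: "nat \<Rightarrow> (complex \<Rightarrow> complex) \<Rightarrow> complex \<Rightarrow> real" where
  "jet_norm k h z = (\<Sum>j<k. norm ((deriv ^^ j) h z))"

definition higher_deriv_growth_bound ::
  "nat \<Rightarrow> real \<Rightarrow> (complex \<Rightarrow> complex) \<Rightarrow> complex set \<Rightarrow> bool" where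
  "higher_deriv_growth_bound k C h D \<longleftrightarrow> (\<forall>z\<in>D. norm ((deriv ^^ k) h z) \<le> C * (1 + norm (h z)))"

lemma jet_norm_nonneg: "jet_norm k h z \<ge> 0"
  unfolding jet_norm_def by (simp add: sum_nonneg)

lemma norm_le_jet_norm:
  assumes "k \<ge> 1" shows "norm (h z) \<le> jet_norm k h z"
  using member_le_sum[of 0 "{..<k}" "\<lambda>j. norm ((deriv ^^ j) h z)"] assms
  by (simp add: jet_norm_def)

lemma higher_deriv_norm_le_jet_norm:
  assumes "j < k" shows "norm ((deriv ^^ j) h z) \<le> jet_norm k h z"
  unfolding jet_norm_def by (rule member_le_sum) (use assms in auto)

lemma jet_norm_cmult:
  assumes "h holomorphic_on D" "open D" "z \<in> D"
  shows "jet_norm k (\<lambda>w. c * h w) z = norm c * jet_norm k h z"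
  unfolding jet_norm_def
  by (simp add: higher_deriv_cmult[OF assms(1,3,2)] norm_mult sum_distrib_left)

lemma higher_deriv_growth_bound_cmult:
  assumes "h holomorphic_on D" "open D" "C \<ge> 0" "norm c \<le> 1"
    and "higher_deriv_growth_bound k C h D"
  shows "higher_deriv_growth_bound k C (\<lambda>w. c * h w) D"
  unfolding higher_deriv_growth_bound_def
proof
  fix z assume z: "z \<in> D"
  have "norm ((deriv ^^ k) (\<lambda>w. c * h w) z) = norm c * norm ((deriv ^^ k) h z)"
    by (simp add: higher_deriv_cmult[OF assms(1) z assms(2)] norm_mult)
  also have "\<dots> \<le> norm c * (C * (1 + norm (h z)))"
    using assms(5) z by (intro mult_left_mono) (auto simp: higher_deriv_growth_bound_def)
  also have "\<dots> = C * (norm c + norm (c * h z))"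
    by (simp add: norm_mult algebra_simps)
  also have "\<dots> \<le> C * (1 + norm (c * h z))"
    using assms(3,4) by (intro mult_left_mono) auto
  finally show "norm ((deriv ^^ k) (\<lambda>w. c * h w) z) \<le> C * (1 + norm (c * h z))" .
qed

lemma higher_deriv_Suc_norm_le:
  assumes growth: "higher_deriv_growth_bound k C h D" and "C \<ge> 0" and "w \<in> D"
    and U: "jet_norm k h w \<le> U" and "j < k"
  shows "norm ((deriv ^^ Suc j) h w) \<le> (1 + C) * (1 + U)"
proof -
  have "U \<ge> 0" using U jet_norm_nonneg order_trans by blast
  show ?thesis
  proof (cases "Suc j < k")
    case True
    then have "norm ((deriv ^^ Suc j) h w) \<le> U"
      using higher_deriv_norm_le_jet_norm U order_trans by blast
    moreover have "U \<le> (1 + C) * (1 + U)"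
      using \<open>C \<ge> 0\<close> \<open>U \<ge> 0\<close> by (simp add: algebra_simps)
    ultimately show ?thesis by linarith
  next
    case False
    then have "k = Suc j" using \<open>j < k\<close> by simp
    have "norm ((deriv ^^ k) h w) \<le> C * (1 + norm (h w))"
      using growth \<open>w \<in> D\<close> unfolding higher_deriv_growth_bound_def by blast
    also have "\<dots> \<le> C * (1 + U)"
      using norm_le_jet_norm[of k h w] U \<open>k = Suc j\<close> \<open>C \<ge> 0\<close> by (intro mult_left_mono) auto
    finally show ?thesis using \<open>U \<ge> 0\<close> \<open>k = Suc j\<close> by (simp add: algebra_simps)
  qed
qed

lemma jet_norm_cball_growth:
  assumes hol: "h holomorphic_on D" and "open D" and sub: "cball a \<delta> \<subseteq> D" and "C \<ge> 0"
    and growth: "higher_deriv_growth_bound k C h D"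
    and U: "\<forall>w\<in>cball a \<delta>. jet_norm k h w \<le> U" and z: "z \<in> cball a \<delta>"
  shows "jet_norm k h z \<le> jet_norm k h a + real k * \<delta> * (1 + C) * (1 + U)"
proof -
  have hd: "(deriv ^^ j) h holomorphic_on D" for j
    using holomorphic_higher_deriv hol \<open>open D\<close> by blast
  have U0: "U \<ge> 0" using U z jet_norm_nonneg order_trans by blast
  have a: "a \<in> cball a \<delta>" using z by (meson centre_in_cball mem_cball order_trans zero_le_dist)
  have der_bound: "norm ((deriv ^^ Suc j) h w) \<le> (1 + C) * (1 + U)"
    if "j < k" "w \<in> cball a \<delta>" for j w
    using higher_deriv_Suc_norm_le[OF growth \<open>C \<ge> 0\<close> _ _ \<open>j < k\<close>] U that(2) sub by blast
  have lipschitz: "norm ((deriv ^^ j) h z - (deriv ^^ j) h a) \<le> (1 + C) * (1 + U) * \<delta>"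
    if "j < k" for j
  proof -
    have "norm ((deriv ^^ j) h z - (deriv ^^ j) h a) \<le> (1 + C) * (1 + U) * norm (z - a)"
    proof (rule field_differentiable_bound[OF convex_cball _ der_bound[OF that] z a])
      show "((deriv ^^ j) h has_field_derivative (deriv ^^ Suc j) h w) (at w within cball a \<delta>)"
        if "w \<in> cball a \<delta>" for w
        using holomorphic_derivI[OF hd \<open>open D\<close>, of w] that sub by auto
    qed
    also have "\<dots> \<le> (1 + C) * (1 + U) * \<delta>"
      using z U0 \<open>C \<ge> 0\<close> by (intro mult_left_mono) (auto simp: dist_norm norm_minus_commute)
    finally show ?thesis .
  qed
  have "jet_norm k h z \<le> (\<Sum>j<k. norm ((deriv ^^ j) h a) + (1 + C) * (1 + U) * \<delta>)"
    unfolding jet_norm_def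
    by (intro sum_mono order_trans[OF norm_triangle_sub add_left_mono]) (auto intro: lipschitz)
  then show ?thesis by (simp add: sum.distrib jet_norm_def algebra_simps)
qed

lemma jet_norm_cball_bound:
  assumes hol: "h holomorphic_on D" and "open D" and sub: "cball a \<delta> \<subseteq> D" and "0 \<le> \<delta>"
    and "C \<ge> 0" and growth: "higher_deriv_growth_bound k C h D"
    and small: "real k * \<delta> * (1 + C) \<le> 1/2" and M: "jet_norm k h a \<le> M"
  shows "\<forall>z\<in>cball a \<delta>. jet_norm k h z \<le> 2 * M + 1"
proof -
  have "continuous_on (cball a \<delta>) ((deriv ^^ j) h)" for j
    using holomorphic_higher_deriv[OF hol \<open>open D\<close>] sub
    by (meson holomorphic_on_imp_continuous_on holomorphic_on_subset)
  then have "continuous_on (cball a \<delta>) (jet_norm k h)"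
    unfolding jet_norm_def by (intro continuous_intros)
  moreover have "cball a \<delta> \<noteq> {}" using \<open>0 \<le> \<delta>\<close> by simp
  ultimately obtain u where u: "u \<in> cball a \<delta>"
    and max: "\<forall>z\<in>cball a \<delta>. jet_norm k h z \<le> jet_norm k h u"
    using continuous_attains_sup[OF compact_cball] by blast
  define U where "U = jet_norm k h u"
  have "U \<ge> 0" unfolding U_def by (rule jet_norm_nonneg)
  have "U \<le> jet_norm k h a + real k * \<delta> * (1 + C) * (1 + U)"
    unfolding U_def using jet_norm_cball_growth[OF hol \<open>open D\<close> sub \<open>C \<ge> 0\<close> growth max u] .
  also have "\<dots> \<le> M + 1/2 * (1 + U)"
    using M small \<open>U \<ge> 0\<close> by (intro add_mono mult_right_mono) auto
  finally have "U \<le> 2 * M + 1" by (simp add: field_simps)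
  then show ?thesis using max unfolding U_def by force
qed

lemma jet_norm_bound_spreads_locally:
  fixes h :: "nat \<Rightarrow> complex \<Rightarrow> complex"
  assumes hol: "\<And>n. h n holomorphic_on D" and "open D" and "C \<ge> 0"
    and growth: "\<And>n. higher_deriv_growth_bound k C (h n) D" and "a \<in> D"
  obtains \<rho> where "\<rho> > 0" "ball a \<rho> \<subseteq> D"
    "\<And>x M. x \<in> ball a \<rho> \<Longrightarrow> (\<And>n. jet_norm k (h n) x \<le> M) \<Longrightarrow>
       \<forall>n. \<forall>y\<in>ball a \<rho>. jet_norm k (h n) y \<le> 2 * M + 1"
proof -
  obtain e where "e > 0" "cball a e \<subseteq> D" using \<open>open D\<close> \<open>a \<in> D\<close> open_contains_cball by blast
  define c where "c = (real k + 1) * (1 + C)"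
  have "c > 0" using \<open>C \<ge> 0\<close> by (simp add: c_def)
  define \<rho> where "\<rho> = min (e / 3) (1 / (4 * c))"
  have "\<rho> > 0" using \<open>e > 0\<close> \<open>c > 0\<close> by (simp add: \<rho>_def)
  have small: "real k * (2 * \<rho>) * (1 + C) \<le> 1/2"
  proof -
    have "real k * (2 * \<rho>) * (1 + C) \<le> c * (2 * \<rho>)"
      using \<open>\<rho> > 0\<close> \<open>C \<ge> 0\<close> by (simp add: c_def algebra_simps)
    also have "\<dots> \<le> c * (2 / (4 * c))"
      using \<open>c > 0\<close> by (intro mult_left_mono) (auto simp: \<rho>_def)
    also have "\<dots> = 1/2" using \<open>c > 0\<close> by simp
    finally show ?thesis .
  qed
  have cball_sub: "cball x (2 * \<rho>) \<subseteq> D" if "x \<in> ball a \<rho>" for x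
  proof -
    have "cball x (2 * \<rho>) \<subseteq> cball a e"
      using that \<open>e > 0\<close> by (intro cball_subset_cball_iff[THEN iffD2]) (auto simp: \<rho>_def dist_commute)
    then show ?thesis using \<open>cball a e \<subseteq> D\<close> by blast
  qed
  have ball_sub: "ball a \<rho> \<subseteq> cball x (2 * \<rho>)" if "x \<in> ball a \<rho>" for x
  proof
    fix y assume "y \<in> ball a \<rho>"
    moreover have "dist x y \<le> dist a x + dist a y"
      using dist_triangle[of x y a] by (simp add: dist_commute)
    ultimately show "y \<in> cball x (2 * \<rho>)" using that by simp
  qed
  have "\<forall>n. \<forall>y\<in>ball a \<rho>. jet_norm k (h n) y \<le> 2 * M + 1"
    if "x \<in> ball a \<rho>" "\<And>n. jet_norm k (h n) x \<le> M" for x M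
  proof (intro allI ballI)
    fix n y assume "y \<in> ball a \<rho>"
    have "\<forall>z\<in>cball x (2 * \<rho>). jet_norm k (h n) z \<le> 2 * M + 1"
      using \<open>\<rho> > 0\<close> that(2) cball_sub[OF that(1)]
      by (intro jet_norm_cball_bound[OF hol \<open>open D\<close> _ _ \<open>C \<ge> 0\<close> growth small]) auto
    then show "jet_norm k (h n) y \<le> 2 * M + 1"
      using \<open>y \<in> ball a \<rho>\<close> ball_sub[OF that(1)] by blast
  qed
  moreover have "ball a \<rho> \<subseteq> D"
    using \<open>cball a e \<subseteq> D\<close> \<open>\<rho> > 0\<close> \<open>e > 0\<close> by (auto simp: \<rho>_def)
  ultimately show ?thesis using that \<open>\<rho> > 0\<close> by blast
qed

lemma jet_norm_bounded_everywhere: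
  fixes h :: "nat \<Rightarrow> complex \<Rightarrow> complex"
  assumes hol: "\<And>n. h n holomorphic_on D" and "open D" and "connected D" and "C \<ge> 0"
    and growth: "\<And>n. higher_deriv_growth_bound k C (h n) D"
    and "z0 \<in> D" and bound: "\<And>n. jet_norm k (h n) z0 \<le> M0" and "w \<in> D"
  shows "\<exists>M. \<forall>n. jet_norm k (h n) w \<le> M"
proof (rule connected_induction_simple[OF \<open>connected D\<close> \<open>z0 \<in> D\<close> \<open>w \<in> D\<close>])
  show "\<exists>M. \<forall>n. jet_norm k (h n) z0 \<le> M" using bound by blast
next
  fix a assume "a \<in> D"
  obtain \<rho> where "\<rho> > 0" "ball a \<rho> \<subseteq> D" and spread:
    "\<And>x M. x \<in> ball a \<rho> \<Longrightarrow> (\<And>n. jet_norm k (h n) x \<le> M) \<Longrightarrow>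
       \<forall>n. \<forall>y\<in>ball a \<rho>. jet_norm k (h n) y \<le> 2 * M + 1"
    using jet_norm_bound_spreads_locally[where h = h, OF hol \<open>open D\<close> \<open>C \<ge> 0\<close> growth \<open>a \<in> D\<close>] by blast
  have "\<forall>x\<in>ball a \<rho>. \<forall>y\<in>ball a \<rho>.
      (\<exists>M. \<forall>n. jet_norm k (h n) x \<le> M) \<longrightarrow> (\<exists>M. \<forall>n. jet_norm k (h n) y \<le> M)"
    using spread by blast
  moreover have "openin (top_of_set D) (ball a \<rho>)"
    using \<open>ball a \<rho> \<subseteq> D\<close> by (simp add: open_subset)
  ultimately show "\<exists>T. openin (top_of_set D) T \<and> a \<in> T \<and>
      (\<forall>x\<in>T. \<forall>y\<in>T. (\<exists>M. \<forall>n. jet_norm k (h n) x \<le> M) \<longrightarrow> (\<exists>M. \<forall>n. jet_norm k (h n) y \<le> M))"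
    using \<open>\<rho> > 0\<close> by (intro exI[of _ "ball a \<rho>"]) auto
qed

lemma compact_uniform_bound_if_locally_uniform_bound:
  fixes F :: "'i \<Rightarrow> 'a::metric_space \<Rightarrow> real"
  assumes "compact K" and local: "\<And>w. w \<in> K \<Longrightarrow> \<exists>\<delta>>0. \<exists>M. \<forall>i. \<forall>z\<in>ball w \<delta>. F i z \<le> M"
  shows "\<exists>B. \<forall>i. \<forall>z\<in>K. F i z \<le> B"
proof -
  have "\<forall>w\<in>K. \<exists>\<delta>. \<delta> > 0 \<and> (\<exists>M. \<forall>i. \<forall>z\<in>ball w \<delta>. F i z \<le> M)"
    using local by blast
  from bchoice[OF this] obtain \<delta>
    where \<delta>: "\<forall>w\<in>K. \<delta> w > 0 \<and> (\<exists>M. \<forall>i. \<forall>z\<in>ball w (\<delta> w). F i z \<le> M)"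
    by blast
  then have "\<forall>w\<in>K. \<exists>M. \<forall>i. \<forall>z\<in>ball w (\<delta> w). F i z \<le> M" by blast
  from bchoice[OF this] obtain M where M: "\<forall>w\<in>K. \<forall>i. \<forall>z\<in>ball w (\<delta> w). F i z \<le> M w"
    by blast
  have "K \<subseteq> (\<Union>w\<in>K. ball w (\<delta> w))"
  proof
    fix z assume "z \<in> K"
    then have "z \<in> ball z (\<delta> z)" using \<delta> by simp
    then show "z \<in> (\<Union>w\<in>K. ball w (\<delta> w))" using \<open>z \<in> K\<close> by blast
  qed
  then obtain T where "T \<subseteq> K" "finite T" and cover: "K \<subseteq> (\<Union>w\<in>T. ball w (\<delta> w))"
    by (rule compactE_image[OF \<open>compact K\<close> open_ball])
  have "F i z \<le> (\<Sum>w\<in>T. max 0 (M w))" if "z \<in> K" for i z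
  proof -
    obtain w where "w \<in> T" "z \<in> ball w (\<delta> w)" using cover \<open>z \<in> K\<close> by blast
    then have "F i z \<le> max 0 (M w)" using M \<open>T \<subseteq> K\<close> by (meson max.coboundedI2 subsetD)
    also have "\<dots> \<le> (\<Sum>w\<in>T. max 0 (M w))"
      using \<open>w \<in> T\<close> \<open>finite T\<close> by (intro member_le_sum) auto
    finally show ?thesis .
  qed
  then show ?thesis by blast
qed

lemma bounded_on_compact_if_jet_norm_bounded:
  fixes h :: "nat \<Rightarrow> complex \<Rightarrow> complex"
  assumes hol: "\<And>n. h n holomorphic_on D" and "open D" and "connected D" and "C \<ge> 0" and "k \<ge> 1"
    and growth: "\<And>n. higher_deriv_growth_bound k C (h n) D"
    and "z0 \<in> D" and bound: "\<And>n. jet_norm k (h n) z0 \<le> M0"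
    and "compact K" "K \<subseteq> D"
  shows "\<exists>B. \<forall>n. \<forall>z\<in>K. norm (h n z) \<le> B"
proof -
  have "\<exists>\<delta>>0. \<exists>M. \<forall>n. \<forall>z\<in>ball w \<delta>. jet_norm k (h n) z \<le> M" if "w \<in> K" for w
  proof -
    have "w \<in> D" using that \<open>K \<subseteq> D\<close> by blast
    obtain \<rho> where "\<rho> > 0" "ball w \<rho> \<subseteq> D" and spread:
      "\<And>x M. x \<in> ball w \<rho> \<Longrightarrow> (\<And>n. jet_norm k (h n) x \<le> M) \<Longrightarrow>
         \<forall>n. \<forall>y\<in>ball w \<rho>. jet_norm k (h n) y \<le> 2 * M + 1"
      using jet_norm_bound_spreads_locally[where h = h, OF hol \<open>open D\<close> \<open>C \<ge> 0\<close> growth \<open>w \<in> D\<close>] by blast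
    obtain M where M: "\<And>n. jet_norm k (h n) w \<le> M"
      using jet_norm_bounded_everywhere[where h = h, OF assms(1-4) growth \<open>z0 \<in> D\<close> bound \<open>w \<in> D\<close>] by blast
    have "\<forall>n. \<forall>y\<in>ball w \<rho>. jet_norm k (h n) y \<le> 2 * M + 1"
      by (rule spread) (use \<open>\<rho> > 0\<close> M in auto)
    then show ?thesis using \<open>\<rho> > 0\<close> by (intro exI[of _ \<rho>]) auto
  qed
  then obtain B where B: "\<forall>n. \<forall>z\<in>K. jet_norm k (h n) z \<le> B"
    using compact_uniform_bound_if_locally_uniform_bound[where F = "\<lambda>n. jet_norm k (h n)", OF \<open>compact K\<close>]
    by blast
  have "norm (h n z) \<le> B" if "z \<in> K" for n z
    using order_trans[OF norm_le_jet_norm[OF \<open>k \<ge> 1\<close>]] B that by blast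
  then show ?thesis by blast
qed

lemma chordal_Some_Some_le: "chordal (Some a) (Some b) \<le> 2 * norm (a - b)"
proof -
  have "1 \<le> sqrt (1 + (norm a)\<^sup>2) * sqrt (1 + (norm b)\<^sup>2)"
    using mult_mono[of 1 "sqrt (1 + (norm a)\<^sup>2)" 1 "sqrt (1 + (norm b)\<^sup>2)"] by simp
  then show ?thesis by (simp add: divide_le_eq_1 mult_le_cancel_left1 divide_le_eq)
qed

lemma chordal_Some_None_less:
  assumes "e > 0" "norm a > 2 / e" shows "chordal (Some a) None < e"
proof -
  have "0 < sqrt (1 + (norm a)\<^sup>2)" by (simp add: add_pos_nonneg)
  moreover have "2 / e < sqrt (1 + (norm a)\<^sup>2)"
    using assms(2) real_sqrt_le_mono[of "(norm a)\<^sup>2" "1 + (norm a)\<^sup>2"] by simp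
  ultimately show ?thesis
    using assms(1) by (simp add: pos_divide_less_eq mult.commute)
qed

lemma sph_locally_uniform_Some:
  assumes "\<And>K. compact K \<Longrightarrow> K \<subseteq> U \<Longrightarrow> uniform_limit K fs g sequentially"
  shows "sph_locally_uniform fs (\<lambda>z. Some (g z)) U"
  unfolding sph_locally_uniform_def
proof (intro allI impI)
  fix K :: "complex set" and e :: real
  assume K: "compact K \<and> K \<subseteq> U" and "e > 0"
  then have "uniform_limit K fs g sequentially" using assms by blast
  then have "\<forall>\<^sub>F n in sequentially. \<forall>z\<in>K. dist (fs n z) (g z) < e / 2"
    by (rule uniform_limitD) (use \<open>e > 0\<close> in simp)
  then show "\<forall>\<^sub>F n in sequentially. \<forall>z\<in>K. chordal (Some (fs n z)) (Some (g z)) < e"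
  proof eventually_elim
    case (elim n)
    show ?case
    proof
      fix z assume "z \<in> K"
      have "chordal (Some (fs n z)) (Some (g z)) \<le> 2 * norm (fs n z - g z)"
        by (rule chordal_Some_Some_le)
      also have "\<dots> < e" using bspec[OF elim \<open>z \<in> K\<close>] by (simp add: dist_norm)
      finally show "chordal (Some (fs n z)) (Some (g z)) < e" .
    qed
  qed
qed

lemma sph_locally_uniform_None:
  assumes "\<And>K B. compact K \<Longrightarrow> K \<subseteq> U \<Longrightarrow> \<forall>\<^sub>F n in sequentially. \<forall>z\<in>K. B < norm (fs n z)"
  shows "sph_locally_uniform fs (\<lambda>z. None) U"
  unfolding sph_locally_uniform_def
proof (intro allI impI)
  fix K :: "complex set" and e :: real
  assume K: "compact K \<and> K \<subseteq> U" and "e > 0"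
  have "\<forall>\<^sub>F n in sequentially. \<forall>z\<in>K. 2 / e < norm (fs n z)"
    by (rule assms) (use K in auto)
  then show "\<forall>\<^sub>F n in sequentially. \<forall>z\<in>K. chordal (Some (fs n z)) None < e"
    by eventually_elim (use chordal_Some_None_less[OF \<open>e > 0\<close>] in blast)
qed

lemma uniform_limit_scaled_tends_to_infinity:
  fixes h :: "nat \<Rightarrow> 'a::topological_space \<Rightarrow> 'b::real_normed_div_algebra"
  assumes "compact K" "uniform_limit K h g sequentially" "continuous_on K g"
    and "\<forall>z\<in>K. g z \<noteq> 0" and s: "filterlim s at_top sequentially"
  shows "\<forall>\<^sub>F n in sequentially. \<forall>z\<in>K. B < norm (of_real (s n) * h n z)"
proof -
  obtain m where "m > 0" and m: "\<forall>z\<in>K. m \<le> norm (g z)"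
  proof (cases "K = {}")
    case False
    obtain z1 where "z1 \<in> K" "\<forall>z\<in>K. norm (g z1) \<le> norm (g z)"
      using continuous_attains_inf[OF \<open>compact K\<close> False continuous_on_norm[OF assms(3)]] by blast
    then show ?thesis using assms(4) by (intro that[of "norm (g z1)"]) auto
  qed (use that[of 1] in auto)
  define c where "c = 2 * (max B 0 + 1) / m"
  have "c > 0" and cB: "B < c * (m / 2)" using \<open>m > 0\<close> by (auto simp: c_def)
  have "\<forall>\<^sub>F n in sequentially. \<forall>z\<in>K. dist (h n z) (g z) < m / 2"
    by (rule uniform_limitD[OF assms(2)]) (use \<open>m > 0\<close> in simp)
  moreover have "\<forall>\<^sub>F n in sequentially. c \<le> s n"
    using s by (simp add: filterlim_at_top)
  ultimately show ?thesis
  proof eventually_elim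
    case (elim n)
    show ?case
    proof
      fix z assume "z \<in> K"
      have "norm (g z - h n z) < m / 2"
        using bspec[OF elim(1) \<open>z \<in> K\<close>] by (simp add: dist_norm norm_minus_commute)
      then have "m / 2 < norm (h n z)"
        using bspec[OF m \<open>z \<in> K\<close>] norm_triangle_ineq2[of "g z" "h n z"] by linarith
      have "0 < s n" using elim(2) \<open>c > 0\<close> by linarith
      have "B < c * (m / 2)" by (rule cB)
      also have "\<dots> \<le> s n * (m / 2)" using elim(2) \<open>m > 0\<close> by (intro mult_right_mono) auto
      also have "\<dots> < s n * norm (h n z)" using \<open>0 < s n\<close> \<open>m / 2 < norm (h n z)\<close> by simp
      also have "\<dots> = norm (of_real (s n) * h n z)" using \<open>0 < s n\<close> by (simp add: norm_mult)
      finally show "B < norm (of_real (s n) * h n z)" .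
    qed
  qed
qed

lemma jet_norm_Cauchy_bound:
  assumes hol: "h holomorphic_on ball z r" and cont: "continuous_on (cball z r) h" and "r > 0"
    and small: "\<forall>w\<in>ball z r. norm (h w) < \<epsilon>"
  shows "jet_norm k h z \<le> \<epsilon> * (\<Sum>j<k. fact j / r ^ j)"
proof -
  have "norm ((deriv ^^ j) h z) \<le> \<epsilon> * (fact j / r ^ j)" for j
  proof (cases "j = 0")
    case True
    then show ?thesis using bspec[OF small, of z] \<open>r > 0\<close> by simp
  next
    case False
    have "norm ((deriv ^^ j) h z) \<le> fact j * \<epsilon> / r ^ j"
      by (rule Cauchy_higher_deriv_bound[OF hol cont, where y = 0]) (use small \<open>r > 0\<close> False in auto)
    then show ?thesis by (simp add: field_simps)
  qed
  then have "jet_norm k h z \<le> (\<Sum>j<k. \<epsilon> * (fact j / r ^ j))"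
    unfolding jet_norm_def by (intro sum_mono)
  then show ?thesis by (simp add: sum_distrib_left)
qed

lemma jet_norm_tendsto_0_if_uniform_limit_0:
  assumes hol: "\<And>n. h n holomorphic_on D" and "open D" and sub: "cball z r \<subseteq> D" and "r > 0"
    and lim: "uniform_limit (cball z r) h (\<lambda>_. 0) sequentially"
  shows "(\<lambda>n. jet_norm k (h n) z) \<longlonglongrightarrow> 0"
proof (rule tendstoI)
  fix e :: real assume "e > 0"
  define S where "S = (\<Sum>j<k. fact j / r ^ j)"
  have "S \<ge> 0" unfolding S_def using \<open>r > 0\<close> by (intro sum_nonneg) auto
  define \<epsilon> where "\<epsilon> = e / (S + 1)"
  have "\<epsilon> > 0" using \<open>e > 0\<close> \<open>S \<ge> 0\<close> by (simp add: \<epsilon>_def)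
  have "\<epsilon> * S < e"
    using \<open>e > 0\<close> \<open>S \<ge> 0\<close> by (simp add: \<epsilon>_def field_simps)
  have "\<forall>\<^sub>F n in sequentially. \<forall>w\<in>cball z r. dist (h n w) 0 < \<epsilon>"
    by (rule uniform_limitD[OF lim \<open>\<epsilon> > 0\<close>])
  then show "\<forall>\<^sub>F n in sequentially. dist (jet_norm k (h n) z) 0 < e"
  proof eventually_elim
    case (elim n)
    have "h n holomorphic_on ball z r"
      using hol sub ball_subset_cball holomorphic_on_subset by blast
    moreover have "continuous_on (cball z r) (h n)"
      using hol sub holomorphic_on_imp_continuous_on holomorphic_on_subset by blast
    moreover have "\<forall>w\<in>ball z r. norm (h n w) < \<epsilon>"
    proof
      fix w assume "w \<in> ball z r"
      then show "norm (h n w) < \<epsilon>" using bspec[OF elim, of w] by simp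
    qed
    ultimately have "jet_norm k (h n) z \<le> \<epsilon> * S"
      unfolding S_def by (rule jet_norm_Cauchy_bound[OF _ _ \<open>r > 0\<close>])
    then have "jet_norm k (h n) z < e" using \<open>\<epsilon> * S < e\<close> by linarith
    then show ?case using jet_norm_nonneg[of k "h n" z] by (simp add: dist_real_def)
  qed
qed

lemma uniform_limit_nonzero_if_jet_norm_tendsto_nonzero:
  assumes hol: "\<And>n. h n holomorphic_on D" and "open D" and "z \<in> D"
    and lim: "\<And>K. compact K \<Longrightarrow> K \<subseteq> D \<Longrightarrow> uniform_limit K h g sequentially"
    and jet: "(\<lambda>n. jet_norm k (h n) z) \<longlonglongrightarrow> c" and "c \<noteq> 0"
  shows "\<exists>w\<in>D. g w \<noteq> 0"
proof (rule ccontr)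
  assume "\<not> (\<exists>w\<in>D. g w \<noteq> 0)"
  obtain r where "r > 0" "cball z r \<subseteq> D" using \<open>open D\<close> \<open>z \<in> D\<close> open_contains_cball by blast
  have "uniform_limit (cball z r) h g sequentially" by (rule lim[OF compact_cball \<open>cball z r \<subseteq> D\<close>])
  moreover have "uniform_limit (cball z r) h (\<lambda>_. 0) sequentially \<longleftrightarrow>
      uniform_limit (cball z r) h g sequentially"
    by (rule uniform_limit_cong') (use \<open>\<not> (\<exists>w\<in>D. g w \<noteq> 0)\<close> \<open>cball z r \<subseteq> D\<close> in auto)
  ultimately have "(\<lambda>n. jet_norm k (h n) z) \<longlonglongrightarrow> 0"
    using jet_norm_tendsto_0_if_uniform_limit_0[where h = h, OF hol \<open>open D\<close> \<open>cball z r \<subseteq> D\<close> \<open>r > 0\<close>] by simp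
  then show False using LIMSEQ_unique[OF jet] \<open>c \<noteq> 0\<close> by simp
qed

lemma zeros_not_islimpt:
  assumes "g holomorphic_on D" "open D" "connected D" "w \<in> D" "g w \<noteq> 0" "z \<in> D"
  shows "\<not> z islimpt {z\<in>D. g z = 0}"
proof
  assume "z islimpt {z\<in>D. g z = 0}"
  then have "g w = 0"
    by (intro analytic_continuation[OF assms(1-3) _ \<open>z \<in> D\<close> _ _ \<open>w \<in> D\<close>]) auto
  with \<open>g w \<noteq> 0\<close> show False by contradiction
qed

lemma sph_locally_uniform_None_off_zeros:
  assumes "g holomorphic_on D"
    and lim: "\<And>K. compact K \<Longrightarrow> K \<subseteq> D \<Longrightarrow> uniform_limit K h g sequentially"
    and s: "filterlim s at_top sequentially" and f: "\<And>n z. f n z = of_real (s n) * h n z"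
  shows "sph_locally_uniform f (\<lambda>z. None) (D - {z\<in>D. g z = 0})"
proof (rule sph_locally_uniform_None)
  fix K B assume "compact K" and K: "K \<subseteq> D - {z\<in>D. g z = 0}"
  then have "uniform_limit K h g sequentially" using lim K by blast
  moreover have "continuous_on K g"
    using assms(1) K holomorphic_on_imp_continuous_on holomorphic_on_subset by blast
  moreover have "\<forall>z\<in>K. g z \<noteq> 0" using K by blast
  ultimately show "\<forall>\<^sub>F n in sequentially. \<forall>z\<in>K. B < norm (f n z)"
    unfolding f by (rule uniform_limit_scaled_tends_to_infinity[OF \<open>compact K\<close> _ _ _ s])
qed

definition has_quasi_convergent_subseq :: "(nat \<Rightarrow> complex \<Rightarrow> complex) \<Rightarrow> complex set \<Rightarrow> bool" where
  "has_quasi_convergent_subseq fs D \<longleftrightarrow>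
     (\<exists>r E g. strict_mono r \<and> E \<subseteq> D \<and> (\<forall>z\<in>D. \<not> z islimpt E) \<and>
              sph_locally_uniform (fs \<circ> r) g (D - E))"

lemma quasi_normal_iff_has_quasi_convergent_subseq:
  "quasi_normal F D \<longleftrightarrow> (\<forall>fs. (\<forall>n. fs n \<in> F) \<longrightarrow> has_quasi_convergent_subseq fs D)"
  by (simp add: quasi_normal_def has_quasi_convergent_subseq_def)

lemma has_quasi_convergent_subseq_if_subseq:
  assumes "strict_mono r" "has_quasi_convergent_subseq (fs \<circ> r) D"
  shows "has_quasi_convergent_subseq fs D"
proof -
  obtain r' E g where "strict_mono r'" "E \<subseteq> D" "\<forall>z\<in>D. \<not> z islimpt E"
    "sph_locally_uniform (fs \<circ> r \<circ> r') g (D - E)"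
    using assms(2) unfolding has_quasi_convergent_subseq_def by blast
  then show ?thesis
    unfolding has_quasi_convergent_subseq_def
    by (intro exI[of _ "r \<circ> r'"] exI[of _ E] exI[of _ g])
       (simp add: strict_mono_o[OF assms(1)] o_assoc)
qed

lemma bounded_subseq_or_filterlim_at_top:
  fixes a :: "nat \<Rightarrow> real"
  obtains r :: "nat \<Rightarrow> nat" and B :: real where "strict_mono r" "\<And>n. a (r n) \<le> B"
  | "filterlim a at_top sequentially"
proof (cases "\<exists>B. infinite {n. a n \<le> B}")
  case True
  then obtain B where "infinite {n. a n \<le> B}" by blast
  from infinite_enumerate[OF this] obtain r :: "nat \<Rightarrow> nat"
    where "strict_mono r" "\<forall>n. r n \<in> {n. a n \<le> B}"
    by (elim exE conjE)
  then show ?thesis using that(1)[of r B] by simp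
next
  case False
  have "\<forall>\<^sub>F n in sequentially. Z \<le> a n" for Z
  proof -
    have "finite {n. \<not> Z \<le> a n}"
      using False by (auto intro: finite_subset[of _ "{n. a n \<le> Z}"])
    then show ?thesis by (simp add: eventually_cofinite flip: cofinite_eq_sequentially)
  qed
  then show ?thesis using that(2) by (simp add: filterlim_at_top)
qed

lemma uniform_limit_subseq_if_jet_norm_bounded:
  fixes h :: "nat \<Rightarrow> complex \<Rightarrow> complex"
  assumes hol: "\<And>n. h n holomorphic_on D" and "open D" and "connected D" and "C \<ge> 0" and "k \<ge> 1"
    and "\<And>n. higher_deriv_growth_bound k C (h n) D"
    and "z0 \<in> D" and "\<And>n. jet_norm k (h n) z0 \<le> M"
  obtains g and r :: "nat \<Rightarrow> nat" where "g holomorphic_on D" "strict_mono r"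
    "\<And>K. compact K \<Longrightarrow> K \<subseteq> D \<Longrightarrow> uniform_limit K (h \<circ> r) g sequentially"
proof -
  have bounded: "\<exists>B. \<forall>f\<in>range h. \<forall>z\<in>K. norm (f z) \<le> B" if K: "compact K" "K \<subseteq> D" for K
  proof -
    obtain B where "\<forall>n. \<forall>z\<in>K. norm (h n z) \<le> B"
      using bounded_on_compact_if_jet_norm_bounded[where h = h, OF assms K] by blast
    then show ?thesis by blast
  qed
  show ?thesis
    by (rule Montel[OF \<open>open D\<close> _ bounded, of h]) (use hol that in auto)
qed

lemma has_quasi_convergent_subseq_if_jet_norm_bounded:
  fixes f :: "nat \<Rightarrow> complex \<Rightarrow> complex"
  assumes "\<And>n. f n holomorphic_on D" and "open D" and "connected D" and "C \<ge> 0" and "k \<ge> 1"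
    and "\<And>n. higher_deriv_growth_bound k C (f n) D"
    and "z0 \<in> D" and "\<And>n. jet_norm k (f n) z0 \<le> M"
  shows "has_quasi_convergent_subseq f D"
proof -
  obtain g and r :: "nat \<Rightarrow> nat" where "strict_mono r"
    and lim: "\<And>K. compact K \<Longrightarrow> K \<subseteq> D \<Longrightarrow> uniform_limit K (f \<circ> r) g sequentially"
    using uniform_limit_subseq_if_jet_norm_bounded[where h = f, OF assms] by blast
  have "sph_locally_uniform (f \<circ> r) (\<lambda>z. Some (g z)) (D - {})"
    by (rule sph_locally_uniform_Some) (simp add: lim)
  then show ?thesis
    unfolding has_quasi_convergent_subseq_def using \<open>strict_mono r\<close>
    by (intro exI[of _ r] exI[of _ "{}"] exI[of _ "\<lambda>z. Some (g z)"]) simp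
qed

lemma rescaled_by_jet_norm:
  assumes hol: "f holomorphic_on D" and "open D" and "C \<ge> 0"
    and growth: "higher_deriv_growth_bound k C f D" and "z0 \<in> D"
  defines "s \<equiv> 1 + jet_norm k f z0"
  shows "higher_deriv_growth_bound k C (\<lambda>z. of_real (inverse s) * f z) D"
    and "jet_norm k (\<lambda>z. of_real (inverse s) * f z) z0 = 1 - inverse s"
proof -
  have "s \<ge> 1" using jet_norm_nonneg[of k f z0] by (simp add: s_def)
  then show "higher_deriv_growth_bound k C (\<lambda>z. of_real (inverse s) * f z) D"
    by (intro higher_deriv_growth_bound_cmult[OF hol \<open>open D\<close> \<open>C \<ge> 0\<close> _ growth])
       (simp add: norm_inverse inverse_le_1_iff)
  have "jet_norm k (\<lambda>z. of_real (inverse s) * f z) z0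
      = norm (of_real (inverse s) :: complex) * jet_norm k f z0"
    by (rule jet_norm_cmult[OF hol \<open>open D\<close> \<open>z0 \<in> D\<close>])
  also have "\<dots> = inverse s * (s - 1)"
    using \<open>s \<ge> 1\<close> unfolding norm_of_real by (simp add: s_def)
  also have "\<dots> = 1 - inverse s" using \<open>s \<ge> 1\<close> by (simp add: field_simps)
  finally show "jet_norm k (\<lambda>z. of_real (inverse s) * f z) z0 = 1 - inverse s" .
qed

lemma has_quasi_convergent_subseq_if_jet_norm_tendsto_infinity:
  fixes f :: "nat \<Rightarrow> complex \<Rightarrow> complex"
  assumes hol: "\<And>n. f n holomorphic_on D" and "open D" and "connected D" and "C \<ge> 0" and "k \<ge> 1"
    and growth: "\<And>n. higher_deriv_growth_bound k C (f n) D"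
    and "z0 \<in> D" and diverge: "filterlim (\<lambda>n. jet_norm k (f n) z0) at_top sequentially"
  shows "has_quasi_convergent_subseq f D"
proof -
  define s where "s n = 1 + jet_norm k (f n) z0" for n
  define h where "h n = (\<lambda>z. of_real (inverse (s n)) * f n z)" for n
  have "s n \<ge> 1" for n using jet_norm_nonneg[of k "f n" z0] by (simp add: s_def)
  have hol_h: "h n holomorphic_on D" for n
    unfolding h_def using hol by (intro holomorphic_intros)
  have growth_h: "higher_deriv_growth_bound k C (h n) D"
    and jet_h: "jet_norm k (h n) z0 = 1 - inverse (s n)" for n
    unfolding h_def s_def using rescaled_by_jet_norm[OF hol \<open>open D\<close> \<open>C \<ge> 0\<close> growth \<open>z0 \<in> D\<close>]
    by simp_all
  have s: "filterlim s at_top sequentially"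
    unfolding s_def by (rule filterlim_tendsto_add_at_top[OF tendsto_const diverge])
  have "jet_norm k (h n) z0 \<le> 1" for n
    unfolding jet_h using \<open>s n \<ge> 1\<close> by simp
  then obtain g and r :: "nat \<Rightarrow> nat" where "g holomorphic_on D" "strict_mono r"
    and lim: "\<And>K. compact K \<Longrightarrow> K \<subseteq> D \<Longrightarrow> uniform_limit K (h \<circ> r) g sequentially"
    using uniform_limit_subseq_if_jet_norm_bounded[where h = h,
        OF hol_h \<open>open D\<close> \<open>connected D\<close> \<open>C \<ge> 0\<close> \<open>k \<ge> 1\<close> growth_h \<open>z0 \<in> D\<close>] by blast
  have "(\<lambda>n. jet_norm k (h n) z0) \<longlonglongrightarrow> 1"
    unfolding jet_h using tendsto_diff[OF tendsto_const tendsto_inverse_0_at_top[OF s], of 1] by simp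
  then have "(\<lambda>n. jet_norm k ((h \<circ> r) n) z0) \<longlonglongrightarrow> 1"
    using LIMSEQ_subseq_LIMSEQ[OF _ \<open>strict_mono r\<close>] by (simp add: o_def)
  then obtain w where "w \<in> D" "g w \<noteq> 0"
    using uniform_limit_nonzero_if_jet_norm_tendsto_nonzero[where h = "h \<circ> r",
        OF _ \<open>open D\<close> \<open>z0 \<in> D\<close> lim] hol_h by fastforce
  then have "\<forall>z\<in>D. \<not> z islimpt {z\<in>D. g z = 0}"
    using zeros_not_islimpt[OF \<open>g holomorphic_on D\<close> \<open>open D\<close> \<open>connected D\<close>] by blast
  moreover have "sph_locally_uniform (f \<circ> r) (\<lambda>z. None) (D - {z\<in>D. g z = 0})"
  proof (rule sph_locally_uniform_None_off_zeros[OF \<open>g holomorphic_on D\<close> lim])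
    show "filterlim (s \<circ> r) at_top sequentially"
      using filterlim_compose[OF s filterlim_subseq[OF \<open>strict_mono r\<close>]] by (simp add: o_def)
    show "(f \<circ> r) n z = of_real ((s \<circ> r) n) * (h \<circ> r) n z" for n z
      using \<open>s (r n) \<ge> 1\<close> by (simp add: h_def)
  qed
  ultimately show ?thesis
    unfolding has_quasi_convergent_subseq_def using \<open>strict_mono r\<close>
    by (intro exI[of _ r] exI[of _ "{z\<in>D. g z = 0}"] exI[of _ "\<lambda>z. None"]) auto
qed

theorem theorem1:
  fixes k :: nat and C :: real and D :: "complex set"
  assumes "k \<ge> 2" and "C > 0" and "open D" and "connected D" and "D \<noteq> {}"
  shows "quasi_normal
           {f. f holomorphic_on D \<and>
               (\<forall>z\<in>D. norm ((deriv ^^ k) f z) / (1 + norm (f z)) \<le> C)} D"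
  unfolding quasi_normal_iff_has_quasi_convergent_subseq
proof (intro allI impI)
  fix fs :: "nat \<Rightarrow> complex \<Rightarrow> complex" assume fs: "\<forall>n. fs n \<in> {f. f holomorphic_on D \<and>
      (\<forall>z\<in>D. norm ((deriv ^^ k) f z) / (1 + norm (f z)) \<le> C)}"
  have "k \<ge> 1" "C \<ge> 0" using assms(1,2) by simp_all
  have hol: "fs n holomorphic_on D" for n using fs by simp
  have growth: "higher_deriv_growth_bound k C (fs n) D" for n
    using fs unfolding higher_deriv_growth_bound_def
    by (simp add: pos_divide_le_eq add_pos_nonneg mult.commute)
  obtain z0 where "z0 \<in> D" using \<open>D \<noteq> {}\<close> by blast
  consider (bounded) r :: "nat \<Rightarrow> nat" and B :: real
      where "strict_mono r" "\<And>n. jet_norm k (fs (r n)) z0 \<le> B"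
    | (diverging) "filterlim (\<lambda>n. jet_norm k (fs n) z0) at_top sequentially"
    using bounded_subseq_or_filterlim_at_top[of "\<lambda>n. jet_norm k (fs n) z0"] by blast
  then show "has_quasi_convergent_subseq fs D"
  proof cases
    case bounded
    then have "has_quasi_convergent_subseq (fs \<circ> r) D"
      using has_quasi_convergent_subseq_if_jet_norm_bounded[where f = "fs \<circ> r" and M = B,
          OF _ \<open>open D\<close> \<open>connected D\<close> \<open>C \<ge> 0\<close> \<open>k \<ge> 1\<close> _ \<open>z0 \<in> D\<close>] hol growth
      by simp
    with \<open>strict_mono r\<close> show ?thesis by (rule has_quasi_convergent_subseq_if_subseq)
  next
    case diverging
    then show ?thesis
      by (rule has_quasi_convergent_subseq_if_jet_norm_tendsto_infinity[where f = fs,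
          OF hol \<open>open D\<close> \<open>connected D\<close> \<open>C \<ge> 0\<close> \<open>k \<ge> 1\<close> growth \<open>z0 \<in> D\<close>])
  qed
qed

end
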